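(* Let $m_{11},m_{12},m_{13}\in k$ with $(m_{11},m_{12},m_{13})\neq0$ and $m_{12}l_1^2+m_{13}l_2^2=m_{11}$ where $l_1=l_2=0$, and let $M=\begin{pmatrix}m_{11}&m_{12}&m_{13}\\ l_1m_{11}&l_1m_{12}&l_1m_{13}\\ l_2m_{11}&l_2m_{12}&l_2m_{13}\end{pmatrix}$. Then: (1) if $m_{12}\neq0$ and $m_{13}\neq0$, then $\mathcal{A}_{\mathcal{O}_{-1}(k^3)}(M)\cong\mathcal{A}_{\mathcal{O}_{-1}(k^3)}(E_{12}+E_{13})$; (2) if $m_{13}=0,m_{12}\neq0$, or $m_{12}=0,m_{13}\neq0$, then $\mathcal{A}_{\mathcal{O}_{-1}(k^3)}(M)\cong\mathcal{A}_{\mathcal{O}_{-1}(k^3)}(E_{12})$.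
   Context: $k$ is an algebraically closed field of characteristic zero. $E_{ij}$ denotes the $3\times3$ matrix unit with $1$ in position $(i,j)$ and $0$ elsewhere. For $M=(m_{ij})\in M_3(k)$, $\mathcal{A}_{\mathcal{O}_{-1}(k^3)}(M)$ is the connected cochain DG algebra whose underlying graded algebra is generated by degree-one $x_1,x_2,x_3$ subject to $x_ix_j=-x_jx_i$ ($i<j$), with differential determined by $\partial(x_i)=\sum_j m_{ij}x_j^2$ and the Leibniz rule; $\cong$ means isomorphism of DG algebras. *)

theory Defs
  imports "HOL-Computational_Algebra.Polynomial"
begin

text \<open>The skew polynomial algebra O_{-1}(k^3) is modelled concretely: an element is a
finitely supported function from exponent triples (a1,a2,a3) (standing for the ordered
monomial x1^a1 x2^a2 x3^a3) to the field.\<close>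

type_synonym mono = "nat \<times> nat \<times> nat"
type_synonym 'a skw = "mono \<Rightarrow> 'a"

definition skw_carrier :: "'a::field skw set" where
  "skw_carrier = {p. finite {a. p a \<noteq> 0}}"

fun mdeg :: "mono \<Rightarrow> nat" where
  "mdeg (a1, a2, a3) = a1 + a2 + a3"

text \<open>Sign arising from (x^a)(x^b) = sign * x^(a+b) using x_i x_j = - x_j x_i (i<j).\<close>
fun msign_exp :: "mono \<Rightarrow> mono \<Rightarrow> nat" where
  "msign_exp (a1, a2, a3) (b1, b2, b3) = b1 * a2 + b1 * a3 + b2 * a3"

definition skw_mult :: "'a::field skw \<Rightarrow> 'a skw \<Rightarrow> 'a skw" where
  "skw_mult p q = (\<lambda>(m1, m2, m3).
     \<Sum>a1\<le>m1. \<Sum>a2\<le>m2. \<Sum>a3\<le>m3.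
       (-1) ^ msign_exp (a1, a2, a3) (m1 - a1, m2 - a2, m3 - a3)
       * p (a1, a2, a3) * q (m1 - a1, m2 - a2, m3 - a3))"

definition skw_one :: "'a::field skw" where
  "skw_one = (\<lambda>m. if m = (0, 0, 0) then 1 else 0)"

definition skw_add :: "'a::field skw \<Rightarrow> 'a skw \<Rightarrow> 'a skw" where
  "skw_add p q = (\<lambda>m. p m + q m)"

definition skw_smult :: "'a::field \<Rightarrow> 'a skw \<Rightarrow> 'a skw" where
  "skw_smult c p = (\<lambda>m. c * p m)"

definition skw_gen :: "nat \<Rightarrow> 'a::field skw" where
  "skw_gen i = (\<lambda>m. if (i = 1 \<and> m = (1, 0, 0)) \<or> (i = 2 \<and> m = (0, 1, 0))
                       \<or> (i = 3 \<and> m = (0, 0, 1)) then 1 else 0)"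

definition skw_homog :: "nat \<Rightarrow> 'a::field skw set" where
  "skw_homog n = {p \<in> skw_carrier. \<forall>a. p a \<noteq> 0 \<longrightarrow> mdeg a = n}"

text \<open>Matrices are functions on indices 1..3; E i j is the matrix unit.\<close>
definition matE :: "nat \<Rightarrow> nat \<Rightarrow> nat \<Rightarrow> nat \<Rightarrow> 'a::field" where
  "matE i j = (\<lambda>r s. if r = i \<and> s = j then 1 else 0)"

definition mat_add :: "(nat \<Rightarrow> nat \<Rightarrow> 'a::field) \<Rightarrow> (nat \<Rightarrow> nat \<Rightarrow> 'a) \<Rightarrow> nat \<Rightarrow> nat \<Rightarrow> 'a" where
  "mat_add A B = (\<lambda>r s. A r s + B r s)"

definition dgen :: "(nat \<Rightarrow> nat \<Rightarrow> 'a::field) \<Rightarrow> nat \<Rightarrow> 'a skw" where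
  "dgen M i = (\<lambda>m. \<Sum>j\<in>{1,2,3}. M i j * skw_mult (skw_gen j) (skw_gen j) m)"

fun wprod :: "nat list \<Rightarrow> 'a::field skw" where
  "wprod [] = skw_one"
| "wprod (y # ys) = skw_mult (skw_gen y) (wprod ys)"

text \<open>Graded Leibniz rule on a word of degree-one generators:
  d(y w) = d(y) w - y d(w).\<close>
fun dword :: "(nat \<Rightarrow> nat \<Rightarrow> 'a::field) \<Rightarrow> nat list \<Rightarrow> 'a skw" where
  "dword M [] = (\<lambda>m. 0)"
| "dword M (y # ys) = skw_add (skw_mult (dgen M y) (wprod ys))
                              (skw_smult (-1) (skw_mult (skw_gen y) (dword M ys)))"

fun mword :: "mono \<Rightarrow> nat list" where
  "mword (a1, a2, a3) = replicate a1 1 @ replicate a2 2 @ replicate a3 3"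

text \<open>The differential of A_{O_{-1}(k^3)}(M), extended linearly from monomials.\<close>
definition skw_d :: "(nat \<Rightarrow> nat \<Rightarrow> 'a::field) \<Rightarrow> 'a skw \<Rightarrow> 'a skw" where
  "skw_d M p = (\<lambda>m. \<Sum>a\<in>{a. p a \<noteq> 0}. p a * dword M (mword a) m)"

definition dg_iso :: "(nat \<Rightarrow> nat \<Rightarrow> 'a::field) \<Rightarrow> (nat \<Rightarrow> nat \<Rightarrow> 'a) \<Rightarrow> bool" where
  "dg_iso M N \<longleftrightarrow> (\<exists>f. bij_betw f skw_carrier skw_carrier
     \<and> (\<forall>p\<in>skw_carrier. \<forall>q\<in>skw_carrier. f (skw_add p q) = skw_add (f p) (f q))
     \<and> (\<forall>c. \<forall>p\<in>skw_carrier. f (skw_smult c p) = skw_smult c (f p))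
     \<and> (\<forall>p\<in>skw_carrier. \<forall>q\<in>skw_carrier. f (skw_mult p q) = skw_mult (f p) (f q))
     \<and> f skw_one = skw_one
     \<and> (\<forall>n. \<forall>p\<in>skw_homog n. f p \<in> skw_homog n)
     \<and> (\<forall>p\<in>skw_carrier. f (skw_d M p) = skw_d N (f p)))"

definition alg_closed :: "'a::field itself \<Rightarrow> bool" where
  "alg_closed _ \<longleftrightarrow> (\<forall>p :: 'a poly. degree p \<ge> 1 \<longrightarrow> (\<exists>x. poly p x = 0))"

end

theory Submission
  imports Defs
begin

text \<open>Since l1 = l2 = 0 forces m11 = 0, the differential is d x1 = m12 x2^2 + m13 x3^2,
d x2 = d x3 = 0. Rescaling the generators, x_i \<mapsto> c_i x_i, is an automorphism of the graded
algebra O_{-1}(k^3); it turns d x1 = \<alpha> x2^2 + \<beta> x3^2 into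
d x1 = (c2^2 \<alpha> / c1) x2^2 + (c3^2 \<beta> / c1) x3^2. Over an algebraically closed field every
nonzero coefficient can thus be normalised to 1, and the case m12 = 0 is first reduced to m13 = 0
by the automorphism exchanging x2 and x3.\<close>

lemma skw_ext: "(\<And>a1 a2 a3. p (a1, a2, a3) = q (a1, a2, a3)) \<Longrightarrow> p = q"
  by (rule ext) (metis prod_cases3)

definition skw_monom :: "mono \<Rightarrow> 'a::field skw" where
  "skw_monom a = (\<lambda>m. if m = a then 1 else 0)"

lemma skw_gen_eq_monom:
  "skw_gen (Suc 0) = skw_monom (1, 0, 0)" "skw_gen 2 = skw_monom (0, 1, 0)" "skw_gen 3 = skw_monom (0, 0, 1)"
  unfolding skw_gen_def skw_monom_def by auto

lemma skw_one_eq_monom: "skw_one = skw_monom (0, 0, 0)"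
  unfolding skw_one_def skw_monom_def ..

lemma skw_mult_monom_left:
  "skw_mult (skw_monom (b1, b2, b3)) q (m1, m2, m3) =
     (if b1 \<le> m1 \<and> b2 \<le> m2 \<and> b3 \<le> m3
      then (-1) ^ msign_exp (b1, b2, b3) (m1 - b1, m2 - b2, m3 - b3) * q (m1 - b1, m2 - b2, m3 - b3)
      else 0)"
proof -
  have delta: "s * skw_monom (b1, b2, b3) (a1, a2, a3) * r =
      (if a3 = b3 then if a2 = b2 then if a1 = b1 then s * r else 0 else 0 else 0)" for a1 a2 a3 :: nat and s r :: 'a
    by (simp add: skw_monom_def)
  show ?thesis
    unfolding skw_mult_def
    by (simp only: delta prod.case) (cases "b3 \<le> m3"; cases "b2 \<le> m2"; cases "b1 \<le> m1"; simp)
qed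

lemma skw_mult_monom_monom:
  "skw_mult (skw_monom (b1, b2, b3)) (skw_monom (c1, c2, c3)) =
     skw_smult ((-1) ^ msign_exp (b1, b2, b3) (c1, c2, c3)) (skw_monom (b1 + c1, b2 + c2, b3 + c3))"
  by (rule skw_ext) (simp add: skw_mult_monom_left skw_smult_def, auto simp: skw_monom_def)

lemma skw_mult_linear_left:
  "skw_mult (\<lambda>m. x * p m + y * p' m) q m = x * skw_mult p q m + y * skw_mult p' q m"
  unfolding skw_mult_def by (cases m) (simp add: sum.distrib sum_distrib_left algebra_simps)

lemma skw_mult_zero_left [simp]: "skw_mult (\<lambda>m. 0) q = (\<lambda>m. 0)"
  and skw_mult_zero_right [simp]: "skw_mult p (\<lambda>m. 0) = (\<lambda>m. 0)"
  unfolding skw_mult_def by auto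

lemma wprod_replicate_3: "wprod (replicate c 3) = skw_monom (0, 0, c)"
  by (induction c) (auto simp: skw_one_eq_monom skw_gen_eq_monom skw_mult_monom_monom skw_smult_def)

lemma wprod_replicate_23: "wprod (replicate b 2 @ replicate c 3) = skw_monom (0, b, c)"
  by (induction b) (auto simp: wprod_replicate_3 skw_gen_eq_monom skw_mult_monom_monom skw_smult_def)

lemma wprod_replicate_123: "wprod (replicate a 1 @ replicate b 2 @ replicate c 3) = skw_monom (a, b, c)"
  by (induction a) (auto simp: wprod_replicate_23 skw_gen_eq_monom skw_mult_monom_monom skw_smult_def)

lemma skw_sum_monom:
  assumes "p \<in> skw_carrier"
  shows "(\<Sum>a | p a \<noteq> 0. p a * skw_monom a b) = p b"
proof -
  have "(\<Sum>a | p a \<noteq> 0. p a * skw_monom a b) = (\<Sum>a | p a \<noteq> 0. if b = a then p b else 0)"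
    by (rule sum.cong) (auto simp: skw_monom_def)
  also have "\<dots> = p b"
    using assms by (simp add: skw_carrier_def)
  finally show ?thesis .
qed

definition row1_matrix :: "(nat \<Rightarrow> nat \<Rightarrow> 'a::field) \<Rightarrow> 'a \<Rightarrow> 'a \<Rightarrow> bool" where
  "row1_matrix M \<alpha> \<beta> \<longleftrightarrow>
     M 1 1 = 0 \<and> M 1 2 = \<alpha> \<and> M 1 3 = \<beta> \<and> (\<forall>j. M 2 j = 0 \<and> M 3 j = 0)"

text \<open>As x2^2 and x3^2 are central, d(x1^2) = 0, so d(x1^a1 x2^a2 x3^a3) is
x1^(a1-1) (\<alpha> x2^2 + \<beta> x3^2) x2^a2 x3^a3 for odd a1 and 0 for even a1; on coefficients this reads:\<close>

definition row1_diff :: "'a::field \<Rightarrow> 'a \<Rightarrow> 'a skw \<Rightarrow> 'a skw" where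
  "row1_diff \<alpha> \<beta> p = (\<lambda>(m1, m2, m3). if even m1 then
      (if 2 \<le> m2 then \<alpha> * p (m1 + 1, m2 - 2, m3) else 0) +
      (if 2 \<le> m3 then \<beta> * p (m1 + 1, m2, m3 - 2) else 0)
     else 0)"

context
  fixes M :: "nat \<Rightarrow> nat \<Rightarrow> 'a::field" and \<alpha> \<beta> :: 'a
  assumes M: "row1_matrix M \<alpha> \<beta>"
begin

lemma dgen_row1_matrix:
  "dgen M 1 = (\<lambda>m. \<alpha> * skw_monom (0, 2, 0) m + \<beta> * skw_monom (0, 0, 2) m)"
  "dgen M 2 = (\<lambda>m. 0)" "dgen M 3 = (\<lambda>m. 0)"
proof -
  have "skw_mult (skw_gen 2) (skw_gen 2) = (skw_monom (0, 2, 0) :: 'a skw)"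
    "skw_mult (skw_gen 3) (skw_gen 3) = (skw_monom (0, 0, 2) :: 'a skw)"
    by (simp_all add: skw_gen_eq_monom skw_mult_monom_monom skw_smult_def, simp_all add: numeral_2_eq_2)
  with M show "dgen M 1 = (\<lambda>m. \<alpha> * skw_monom (0, 2, 0) m + \<beta> * skw_monom (0, 0, 2) m)"
    by (simp add: dgen_def row1_matrix_def)
  show "dgen M 2 = (\<lambda>m. 0)" "dgen M 3 = (\<lambda>m. 0)"
    using M by (simp_all add: dgen_def row1_matrix_def)
qed

lemma dword_row1_matrix_23: "dword M (replicate b 2 @ replicate c 3) = (\<lambda>m. 0)"
  by (induction b) (induction c, auto simp: dgen_row1_matrix skw_add_def skw_smult_def)

lemma dword_row1_matrix:
  "dword M (replicate a 1 @ replicate b 2 @ replicate c 3) =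
     (if odd a then (\<lambda>m. \<alpha> * skw_monom (a - 1, b + 2, c) m + \<beta> * skw_monom (a - 1, b, c + 2) m)
      else (\<lambda>m. 0))"
proof (induction a)
  case 0
  then show ?case by (simp add: dword_row1_matrix_23)
next
  case (Suc a)
  have "dword M (replicate (Suc a) 1 @ replicate b 2 @ replicate c 3) =
      skw_add (skw_mult (dgen M 1) (skw_monom (a, b, c)))
        (skw_smult (-1) (skw_mult (skw_gen 1) (dword M (replicate a 1 @ replicate b 2 @ replicate c 3))))"
    by (simp only: replicate_Suc append_Cons dword.simps wprod_replicate_123)
  also have "\<dots> = (if odd (Suc a)
      then (\<lambda>m. \<alpha> * skw_monom (Suc a - 1, b + 2, c) m + \<beta> * skw_monom (Suc a - 1, b, c + 2) m)
      else (\<lambda>m. 0))"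
    unfolding Suc dgen_row1_matrix
    by (rule skw_ext) (simp add: skw_add_def skw_smult_def skw_mult_linear_left skw_mult_monom_monom
      skw_gen_eq_monom skw_mult_monom_left, auto simp: skw_monom_def dest!: odd_pos)
  finally show ?case .
qed

lemma dword_mword_row1_matrix: "dword M (mword a) = row1_diff \<alpha> \<beta> (skw_monom a)"
proof (cases a)
  case (fields a1 a2 a3)
  show ?thesis
  proof (rule skw_ext)
    fix m1 m2 m3
    show "dword M (mword a) (m1, m2, m3) = row1_diff \<alpha> \<beta> (skw_monom a) (m1, m2, m3)"
      unfolding fields mword.simps dword_row1_matrix row1_diff_def skw_monom_def
      by (cases "odd a1") (auto dest: odd_pos)
  qed
qed

lemma skw_d_row1_matrix:
  assumes "p \<in> skw_carrier"
  shows "skw_d M p = row1_diff \<alpha> \<beta> p"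
proof (rule skw_ext)
  fix m1 m2 m3
  have expand: "(\<Sum>a | p a \<noteq> 0. p a * (c * skw_monom a b)) = c * p b" for b and c :: 'a
    using skw_sum_monom[OF assms] by (simp add: mult.left_commute flip: sum_distrib_left)
  show "skw_d M p (m1, m2, m3) = row1_diff \<alpha> \<beta> p (m1, m2, m3)"
    by (simp add: skw_d_def dword_mword_row1_matrix row1_diff_def distrib_left sum.distrib expand)
qed

end


definition graded_alg_aut :: "('a::field skw \<Rightarrow> 'a skw) \<Rightarrow> bool" where
  "graded_alg_aut f \<longleftrightarrow> bij_betw f skw_carrier skw_carrier
     \<and> (\<forall>p\<in>skw_carrier. \<forall>q\<in>skw_carrier. f (skw_add p q) = skw_add (f p) (f q))
     \<and> (\<forall>c. \<forall>p\<in>skw_carrier. f (skw_smult c p) = skw_smult c (f p))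
     \<and> (\<forall>p\<in>skw_carrier. \<forall>q\<in>skw_carrier. f (skw_mult p q) = skw_mult (f p) (f q))
     \<and> f skw_one = skw_one
     \<and> (\<forall>n. \<forall>p\<in>skw_homog n. f p \<in> skw_homog n)"

lemma graded_alg_aut_carrier:
  assumes "graded_alg_aut f" "p \<in> skw_carrier"
  shows "f p \<in> skw_carrier"
proof -
  from assms(1) have "bij_betw f skw_carrier skw_carrier"
    by (simp add: graded_alg_aut_def)
  from bij_betw_apply[OF this assms(2)] show ?thesis .
qed

lemma graded_alg_aut_comp:
  assumes f: "graded_alg_aut f" and g: "graded_alg_aut g"
  shows "graded_alg_aut (f \<circ> g)"
  unfolding graded_alg_aut_def
proof (intro conjI ballI allI)
  note g_carrier = graded_alg_aut_carrier[OF g]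
  show "bij_betw (f \<circ> g) skw_carrier skw_carrier"
    using f g unfolding graded_alg_aut_def by (blast intro: bij_betw_trans)
  show "(f \<circ> g) (skw_add p q) = skw_add ((f \<circ> g) p) ((f \<circ> g) q)"
    if "p \<in> skw_carrier" "q \<in> skw_carrier" for p q
    using f g that g_carrier unfolding graded_alg_aut_def by simp
  show "(f \<circ> g) (skw_smult c p) = skw_smult c ((f \<circ> g) p)" if "p \<in> skw_carrier" for c p
    using f g that g_carrier unfolding graded_alg_aut_def by simp
  show "(f \<circ> g) (skw_mult p q) = skw_mult ((f \<circ> g) p) ((f \<circ> g) q)"
    if "p \<in> skw_carrier" "q \<in> skw_carrier" for p q
    using f g that g_carrier unfolding graded_alg_aut_def by simp
  show "(f \<circ> g) skw_one = skw_one"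
    using f g unfolding graded_alg_aut_def by simp
  show "(f \<circ> g) p \<in> skw_homog n" if "p \<in> skw_homog n" for n p
    using f g that unfolding graded_alg_aut_def by simp
qed

lemma dg_iso_row1_matrixI:
  assumes "graded_alg_aut f" "row1_matrix M \<alpha> \<beta>" "row1_matrix N \<alpha>' \<beta>'"
    and "\<And>p. f (row1_diff \<alpha> \<beta> p) = row1_diff \<alpha>' \<beta>' (f p)"
  shows "dg_iso M N"
proof -
  have "f (skw_d M p) = skw_d N (f p)" if "p \<in> skw_carrier" for p
    using that assms(4) graded_alg_aut_carrier[OF assms(1)]
    by (simp add: skw_d_row1_matrix[OF assms(2)] skw_d_row1_matrix[OF assms(3)])
  with assms(1) show ?thesis
    unfolding dg_iso_def graded_alg_aut_def by blast
qed

definition skw_scale :: "'a::field \<Rightarrow> 'a \<Rightarrow> 'a \<Rightarrow> 'a skw \<Rightarrow> 'a skw" where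
  "skw_scale c1 c2 c3 p = (\<lambda>(a1, a2, a3). c1 ^ a1 * c2 ^ a2 * c3 ^ a3 * p (a1, a2, a3))"

lemma skw_scale_nonzero: "skw_scale c1 c2 c3 p a \<noteq> 0 \<Longrightarrow> p a \<noteq> 0"
  by (cases a) (simp add: skw_scale_def)

lemma skw_scale_carrier: "p \<in> skw_carrier \<Longrightarrow> skw_scale c1 c2 c3 p \<in> skw_carrier"
  unfolding skw_carrier_def by (auto elim!: finite_subset[rotated] dest: skw_scale_nonzero)

lemma skw_scale_scale: "skw_scale a1 a2 a3 (skw_scale b1 b2 b3 p) = skw_scale (a1 * b1) (a2 * b2) (a3 * b3) p"
  by (rule skw_ext) (simp add: skw_scale_def power_mult_distrib ac_simps)

lemma skw_scale_1 [simp]: "skw_scale 1 1 1 p = p"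
  by (rule skw_ext) (simp add: skw_scale_def)

lemma skw_scale_mult: "skw_scale c1 c2 c3 (skw_mult p q) = skw_mult (skw_scale c1 c2 c3 p) (skw_scale c1 c2 c3 q)"
proof (rule skw_ext)
  fix m1 m2 m3 :: nat
  have split_powers: "s * (c1 ^ a1 * c2 ^ a2 * c3 ^ a3 * P) * (c1 ^ (m1 - a1) * c2 ^ (m2 - a2) * c3 ^ (m3 - a3) * Q) =
      c1 ^ m1 * c2 ^ m2 * c3 ^ m3 * (s * P * Q)"
    if "a1 \<le> m1" "a2 \<le> m2" "a3 \<le> m3" for a1 a2 a3 and s P Q :: 'a
  proof -
    have "c1 ^ m1 = c1 ^ a1 * c1 ^ (m1 - a1)" "c2 ^ m2 = c2 ^ a2 * c2 ^ (m2 - a2)" "c3 ^ m3 = c3 ^ a3 * c3 ^ (m3 - a3)"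
      using that by (simp_all flip: power_add)
    then show ?thesis by (simp only: ac_simps)
  qed
  show "skw_scale c1 c2 c3 (skw_mult p q) (m1, m2, m3) =
      skw_mult (skw_scale c1 c2 c3 p) (skw_scale c1 c2 c3 q) (m1, m2, m3)"
    unfolding skw_scale_def skw_mult_def
    by (simp add: sum_distrib_left) (intro sum.cong refl; rule split_powers[symmetric]; simp)
qed

lemma graded_alg_aut_skw_scale:
  assumes "c1 \<noteq> 0" "c2 \<noteq> 0" "c3 \<noteq> 0"
  shows "graded_alg_aut (skw_scale c1 c2 c3)"
  unfolding graded_alg_aut_def
proof (intro conjI ballI allI)
  show "bij_betw (skw_scale c1 c2 c3) skw_carrier skw_carrier"
    by (rule bij_betw_byWitness[where f' = "skw_scale (inverse c1) (inverse c2) (inverse c3)"])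
      (use assms in \<open>auto simp: skw_scale_scale skw_scale_carrier\<close>)
  show "skw_scale c1 c2 c3 (skw_add p q) = skw_add (skw_scale c1 c2 c3 p) (skw_scale c1 c2 c3 q)" for p q
    by (rule skw_ext) (simp add: skw_scale_def skw_add_def algebra_simps)
  show "skw_scale c1 c2 c3 (skw_smult c p) = skw_smult c (skw_scale c1 c2 c3 p)" for c p
    by (rule skw_ext) (simp add: skw_scale_def skw_smult_def algebra_simps)
  show "skw_scale c1 c2 c3 (skw_mult p q) = skw_mult (skw_scale c1 c2 c3 p) (skw_scale c1 c2 c3 q)" for p q
    by (rule skw_scale_mult)
  show "skw_scale c1 c2 c3 skw_one = skw_one"
    by (rule skw_ext) (simp add: skw_scale_def skw_one_def)
  show "skw_scale c1 c2 c3 p \<in> skw_homog n" if "p \<in> skw_homog n" for n p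
    using that by (auto simp: skw_homog_def skw_scale_carrier dest: skw_scale_nonzero)
qed

lemma skw_scale_row1_diff:
  assumes "c2 ^ 2 * \<alpha> = c1 * \<alpha>'" "c3 ^ 2 * \<beta> = c1 * \<beta>'"
  shows "skw_scale c1 c2 c3 (row1_diff \<alpha> \<beta> p) = row1_diff \<alpha>' \<beta>' (skw_scale c1 c2 c3 p)"
proof (rule skw_ext)
  fix m1 m2 m3 :: nat
  have x2: "c1 ^ m1 * c2 ^ m2 * c3 ^ m3 * (\<alpha> * P) = \<alpha>' * (c1 ^ (m1 + 1) * c2 ^ (m2 - 2) * c3 ^ m3 * P)"
    if "2 \<le> m2" for P
  proof -
    have "c2 ^ m2 = c2 ^ (m2 - 2) * c2 ^ 2"
      using that by (simp only: power_add[symmetric] le_add_diff_inverse2)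
    then have "c1 ^ m1 * c2 ^ m2 * c3 ^ m3 * (\<alpha> * P) = (c2 ^ 2 * \<alpha>) * (c1 ^ m1 * c2 ^ (m2 - 2) * c3 ^ m3 * P)"
      by (simp only: ac_simps)
    then show ?thesis
      by (simp only: assms(1)) (simp add: ac_simps)
  qed
  have x3: "c1 ^ m1 * c2 ^ m2 * c3 ^ m3 * (\<beta> * P) = \<beta>' * (c1 ^ (m1 + 1) * c2 ^ m2 * c3 ^ (m3 - 2) * P)"
    if "2 \<le> m3" for P
  proof -
    have "c3 ^ m3 = c3 ^ (m3 - 2) * c3 ^ 2"
      using that by (simp only: power_add[symmetric] le_add_diff_inverse2)
    then have "c1 ^ m1 * c2 ^ m2 * c3 ^ m3 * (\<beta> * P) = (c3 ^ 2 * \<beta>) * (c1 ^ m1 * c2 ^ m2 * c3 ^ (m3 - 2) * P)"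
      by (simp only: ac_simps)
    then show ?thesis
      by (simp only: assms(2)) (simp add: ac_simps)
  qed
  show "skw_scale c1 c2 c3 (row1_diff \<alpha> \<beta> p) (m1, m2, m3) =
      row1_diff \<alpha>' \<beta>' (skw_scale c1 c2 c3 p) (m1, m2, m3)"
    unfolding skw_scale_def row1_diff_def by (simp add: distrib_left x2 x3)
qed

text \<open>The sign comes from x3^a x2^b = (-1)^(a b) x2^b x3^a.\<close>

definition skw_swap23 :: "'a::field skw \<Rightarrow> 'a skw" where
  "skw_swap23 p = (\<lambda>(a1, a2, a3). (-1) ^ (a2 * a3) * p (a1, a3, a2))"

lemma skw_swap23_swap23 [simp]: "skw_swap23 (skw_swap23 p) = p"
  by (rule skw_ext) (simp add: skw_swap23_def mult.commute flip: mult.assoc power_mult_distrib)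

lemma skw_swap23_carrier: "p \<in> skw_carrier \<Longrightarrow> skw_swap23 p \<in> skw_carrier"
proof -
  assume "p \<in> skw_carrier"
  then have "finite ((\<lambda>(a1, a2, a3). (a1, a3, a2)) ` {a. p a \<noteq> 0})"
    by (simp add: skw_carrier_def)
  moreover have "{a. skw_swap23 p a \<noteq> 0} \<subseteq> (\<lambda>(a1, a2, a3). (a1, a3, a2)) ` {a. p a \<noteq> 0}"
    by (auto simp: skw_swap23_def intro!: image_eqI)
  ultimately show ?thesis
    unfolding skw_carrier_def by (auto elim: finite_subset)
qed

lemma msign_exp_swap23:
  "(-1::'a::ring_1) ^ ((a2 + r2) * (a3 + r3)) * (-1) ^ msign_exp (a1, a3, a2) (r1, r3, r2) =
     (-1) ^ msign_exp (a1, a2, a3) (r1, r2, r3) * (-1) ^ (a2 * a3) * (-1) ^ (r2 * r3)"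
proof -
  have exponents: "(a2 + r2) * (a3 + r3) + msign_exp (a1, a3, a2) (r1, r3, r2) =
      msign_exp (a1, a2, a3) (r1, r2, r3) + a2 * a3 + r2 * r3 + 2 * (a2 * r3)"
    by (simp add: algebra_simps)
  have "(-1::'a) ^ ((a2 + r2) * (a3 + r3) + msign_exp (a1, a3, a2) (r1, r3, r2)) =
      (-1) ^ (msign_exp (a1, a2, a3) (r1, r2, r3) + a2 * a3 + r2 * r3)"
    unfolding exponents by (simp only: power_add power_minus1_even mult_1_right)
  then show ?thesis
    by (simp only: power_add)
qed

lemma skw_swap23_mult: "skw_swap23 (skw_mult p q) = skw_mult (skw_swap23 p) (skw_swap23 q)"
proof (rule skw_ext)
  fix m1 m2 m3 :: nat
  have "skw_swap23 (skw_mult p q) (m1, m2, m3) = (\<Sum>a1\<le>m1. \<Sum>b2\<le>m3. \<Sum>b3\<le>m2. (-1) ^ (m2 * m3) *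
      ((-1) ^ msign_exp (a1, b2, b3) (m1 - a1, m3 - b2, m2 - b3) * p (a1, b2, b3) * q (m1 - a1, m3 - b2, m2 - b3)))"
    unfolding skw_swap23_def skw_mult_def by (simp add: sum_distrib_left)
  also have "\<dots> = (\<Sum>a1\<le>m1. \<Sum>b3\<le>m2. \<Sum>b2\<le>m3. (-1) ^ (m2 * m3) *
      ((-1) ^ msign_exp (a1, b2, b3) (m1 - a1, m3 - b2, m2 - b3) * p (a1, b2, b3) * q (m1 - a1, m3 - b2, m2 - b3)))"
    by (rule sum.cong[OF refl]) (rule sum.swap)
  also have "\<dots> = skw_mult (skw_swap23 p) (skw_swap23 q) (m1, m2, m3)"
    unfolding skw_swap23_def skw_mult_def prod.case
  proof (intro sum.cong refl)
    fix a1 a2 a3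
    assume "a2 \<in> {..m2}" "a3 \<in> {..m3}"
    moreover define r2 r3 where "r2 = m2 - a2" and "r3 = m3 - a3"
    ultimately have m2: "m2 = a2 + r2" and m3: "m3 = a3 + r3"
      by auto
    show "(-1) ^ (m2 * m3) * ((-1) ^ msign_exp (a1, a3, a2) (m1 - a1, m3 - a3, m2 - a2) * p (a1, a3, a2) *
        q (m1 - a1, m3 - a3, m2 - a2)) =
      (-1) ^ msign_exp (a1, a2, a3) (m1 - a1, m2 - a2, m3 - a3) * ((-1) ^ (a2 * a3) * p (a1, a3, a2)) *
        ((-1) ^ ((m2 - a2) * (m3 - a3)) * q (m1 - a1, m3 - a3, m2 - a2))"
      using msign_exp_swap23[of a2 r2 a3 r3 a1 "m1 - a1", where 'a = 'a]
      unfolding m2 m3 by (simp add: ac_simps)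
  qed
  finally show "skw_swap23 (skw_mult p q) (m1, m2, m3) = skw_mult (skw_swap23 p) (skw_swap23 q) (m1, m2, m3)" .
qed

lemma graded_alg_aut_skw_swap23: "graded_alg_aut skw_swap23"
  unfolding graded_alg_aut_def
proof (intro conjI ballI allI)
  show "bij_betw skw_swap23 skw_carrier skw_carrier"
    by (rule bij_betw_byWitness[where f' = skw_swap23]) (auto simp: skw_swap23_carrier)
  show "skw_swap23 (skw_add p q) = skw_add (skw_swap23 p) (skw_swap23 q)" for p q
    by (rule skw_ext) (simp add: skw_swap23_def skw_add_def algebra_simps)
  show "skw_swap23 (skw_smult c p) = skw_smult c (skw_swap23 p)" for c p
    by (rule skw_ext) (simp add: skw_swap23_def skw_smult_def algebra_simps)
  show "skw_swap23 (skw_mult p q) = skw_mult (skw_swap23 p) (skw_swap23 q)" for p q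
    by (rule skw_swap23_mult)
  show "skw_swap23 skw_one = skw_one"
    by (rule skw_ext) (auto simp: skw_swap23_def skw_one_def)
  show "skw_swap23 p \<in> skw_homog n" if p: "p \<in> skw_homog n" for n p
  proof -
    have "mdeg a = n" if "skw_swap23 p a \<noteq> 0" for a
    proof (cases a)
      case (fields a1 a2 a3)
      with that have "p (a1, a3, a2) \<noteq> 0"
        by (simp add: skw_swap23_def)
      with p have "mdeg (a1, a3, a2) = n"
        unfolding skw_homog_def by blast
      with fields show ?thesis
        by simp
    qed
    with p show ?thesis
      unfolding skw_homog_def using skw_swap23_carrier by blast
  qed
qed

lemma neg_one_power_diff_2_mult: "2 \<le> m \<Longrightarrow> (-1::'a::ring_1) ^ ((m - 2) * n) = (-1) ^ (m * n)"
proof -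
  assume "2 \<le> m"
  then have "m * n = ((m - 2) + 2) * n"
    by (simp only: le_add_diff_inverse2)
  then have "m * n = (m - 2) * n + 2 * n"
    by (simp only: add_mult_distrib)
  then show ?thesis
    by (simp only: power_add power_minus1_even mult_1_right)
qed

lemma skw_swap23_row1_diff: "skw_swap23 (row1_diff \<alpha> \<beta> p) = row1_diff \<beta> \<alpha> (skw_swap23 p)"
proof (rule skw_ext)
  fix m1 m2 m3 :: nat
  have "(-1::'a) ^ ((m2 - 2) * m3) = (-1) ^ (m2 * m3)" "(-1::'a) ^ (m3 * (m2 - 2)) = (-1) ^ (m2 * m3)"
    if "2 \<le> m2"
    using neg_one_power_diff_2_mult[OF that, of m3] by (simp_all only: mult.commute)
  moreover have "(-1::'a) ^ ((m3 - 2) * m2) = (-1) ^ (m2 * m3)" "(-1::'a) ^ (m2 * (m3 - 2)) = (-1) ^ (m2 * m3)"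
    if "2 \<le> m3"
    using neg_one_power_diff_2_mult[OF that, of m2] by (simp_all only: mult.commute)
  ultimately show "skw_swap23 (row1_diff \<alpha> \<beta> p) (m1, m2, m3) =
      row1_diff \<beta> \<alpha> (skw_swap23 p) (m1, m2, m3)"
    unfolding skw_swap23_def row1_diff_def by (simp add: distrib_left ac_simps)
qed

lemma dg_iso_row1_matrix_scale:
  assumes "row1_matrix M \<alpha> \<beta>" "row1_matrix N \<alpha>' \<beta>'" "c1 \<noteq> 0" "c2 \<noteq> 0" "c3 \<noteq> 0"
    and "c2 ^ 2 * \<alpha> = c1 * \<alpha>'" "c3 ^ 2 * \<beta> = c1 * \<beta>'"
  shows "dg_iso M N"
  using graded_alg_aut_skw_scale[OF assms(3-5)] assms(1,2)
  by (rule dg_iso_row1_matrixI) (rule skw_scale_row1_diff[OF assms(6,7)])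

lemma dg_iso_row1_matrix_swap_scale:
  assumes "row1_matrix M \<alpha> \<beta>" "row1_matrix N \<alpha>' \<beta>'" "c1 \<noteq> 0" "c2 \<noteq> 0" "c3 \<noteq> 0"
    and "c2 ^ 2 * \<beta> = c1 * \<alpha>'" "c3 ^ 2 * \<alpha> = c1 * \<beta>'"
  shows "dg_iso M N"
  using graded_alg_aut_comp[OF graded_alg_aut_skw_scale[OF assms(3-5)] graded_alg_aut_skw_swap23] assms(1,2)
  by (rule dg_iso_row1_matrixI) (simp add: skw_swap23_row1_diff skw_scale_row1_diff[OF assms(6,7)])

lemma alg_closed_square_root:
  fixes u :: "'a::field"
  assumes "alg_closed TYPE('a)"
  obtains x where "x ^ 2 = u"
proof -
  have "degree [:-u, 0, 1:] \<ge> 1"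
    by simp
  then obtain x where "poly [:-u, 0, 1:] x = 0"
    using assms unfolding alg_closed_def by blast
  then have "x ^ 2 = u"
    by (simp add: power2_eq_square)
  then show ?thesis ..
qed

theorem lemma7p1:
  fixes m11 m12 m13 l1 l2 :: "'a::field_char_0"
    and M :: "nat \<Rightarrow> nat \<Rightarrow> 'a"
  assumes "alg_closed TYPE('a)"
    and "(m11, m12, m13) \<noteq> (0, 0, 0)"
    and "m12 * l1^2 + m13 * l2^2 = m11"
    and "l1 = 0" and "l2 = 0"
    and "M = (\<lambda>i j. (if i = 1 then 1 else if i = 2 then l1 else if i = 3 then l2 else 0)
                   * (if j = 1 then m11 else if j = 2 then m12 else if j = 3 then m13 else 0))"
  shows "(m12 \<noteq> 0 \<and> m13 \<noteq> 0 \<longrightarrow> dg_iso M (mat_add (matE 1 2) (matE 1 3)))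
       \<and> ((m13 = 0 \<and> m12 \<noteq> 0) \<or> (m12 = 0 \<and> m13 \<noteq> 0) \<longrightarrow> dg_iso M (matE 1 2))"
proof -
  have "m11 = 0"
    using assms(3-5) by simp
  with assms(4-6) have M: "row1_matrix M m12 m13"
    by (simp add: row1_matrix_def)
  have N1: "row1_matrix (mat_add (matE 1 2) (matE 1 3)) (1::'a) 1"
    by (simp add: row1_matrix_def mat_add_def matE_def)
  have N2: "row1_matrix (matE 1 2) (1::'a) 0"
    by (simp add: row1_matrix_def matE_def)
  have "dg_iso M (mat_add (matE 1 2) (matE 1 3))" if "m12 \<noteq> 0" "m13 \<noteq> 0"
  proof -
    obtain s t :: 'a where "s ^ 2 = inverse m12" "t ^ 2 = inverse m13"
      using alg_closed_square_root[OF assms(1)] by metis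
    with that show ?thesis
      by (intro dg_iso_row1_matrix_scale[OF M N1, of 1 s t]) auto
  qed
  moreover have "dg_iso M (matE 1 2)" if "m13 = 0" "m12 \<noteq> 0"
    using that by (intro dg_iso_row1_matrix_scale[OF M N2, of m12 1 1]) auto
  moreover have "dg_iso M (matE 1 2)" if "m12 = 0" "m13 \<noteq> 0"
    using that by (intro dg_iso_row1_matrix_swap_scale[OF M N2, of m13 1 1]) auto
  ultimately show ?thesis
    by blast
qed

end
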